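(* Let $n>2$ and $k\ge 2n-1$ be integers. Suppose that $A$ is a set of $k$ integers satisfying $$|S_n(A)|=(k-1)n-3\binom n2+1=kn-\tfrac 32 n^2+\tfrac n2+1.$$ Then $A$ contains at least $n-1$ negative integers and also at least $n-1$ positive integers.
   Context: For a finite set $A\subseteq\mathbb Z$ and a positive integer $n$, define $$S_n(A)=\{a_1+\cdots+a_n:\ a_1,\ldots,a_n\in A,\ \text{and}\ a_i^2\neq a_j^2\ \text{for}\ 1\le i<j\le n\}.$$ *)

theory Defs
  imports Main
begin

definition restricted_sumset :: "nat \<Rightarrow> int set \<Rightarrow> int set" where
  "restricted_sumset n A =
     {(\<Sum>i<n. a i) | a. (\<forall>i<n. a i \<in> A) \<and> (\<forall>i<n. \<forall>j<n. i < j \<longrightarrow> (a i)^2 \<noteq> (a j)^2)}"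

end

theory Submission
  imports Defs
begin

text \<open>
  Distinct squares mean that a summand tuple is injective and contains no two opposite
  numbers, so S_n(A) is the set of sums of the n-subsets of A containing no pair {x, -x}.
  If A had at most n - 2 negative elements, induction on |A| would give
  |S_n(A)| \<ge> n(|A| - n) - C(n,2) + 2, one more than assumed. The induction adds to a
  smaller set either a new maximum, when there are at least n nonnegative elements (the
  n largest of them, with one replaced by the new maximum, give n sums above all old ones);
  or a negative q with -q not in A (shifting S_(n-1) by q); or a pair {v, -v} with v beyond
  all negatives (besides the shift of S_(n-1) by -v, the nonnegative elements together
  with v, at most one of them negated, give new and larger sums).
  The positive elements are counted by applying this to -A.
\<close>

lemma obtain_upper_subset:
  fixes X :: "'a::linorder set"
  assumes "finite X" "n \<le> card X"
  obtains T where "T \<subseteq> X" "card T = n" "\<forall>t\<in>T. \<forall>x\<in>X - T. x < t"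
  using assms(2)
proof (induction n arbitrary: thesis)
  case 0
  then show ?case by (metis card.empty empty_iff empty_subsetI)
next
  case (Suc n)
  obtain T where T: "T \<subseteq> X" "card T = n" "\<forall>t\<in>T. \<forall>x\<in>X - T. x < t"
    using Suc.IH Suc_leD[OF Suc.prems(2)] by blast
  have "finite T"
    using T(1) assms(1) finite_subset by blast
  have "X - T \<noteq> {}"
    using card_mono[OF \<open>finite T\<close>, of X] T(2) Suc.prems(2) by auto
  define m where "m = Max (X - T)"
  have m: "m \<in> X - T" "\<forall>x\<in>X - T. x \<le> m"
    unfolding m_def using Max_in[of "X - T"] \<open>X - T \<noteq> {}\<close> assms(1) by simp_all
  have "\<forall>t\<in>insert m T. \<forall>x\<in>X - insert m T. x < t"
    using T(3) m(2) by (auto intro: le_neq_trans)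
  moreover have "insert m T \<subseteq> X" "card (insert m T) = Suc n"
    using T(1,2) m(1) \<open>finite T\<close> by auto
  ultimately show ?case
    using Suc.prems(1) by blast
qed

lemma sum_le_sum_upper_subset:
  fixes X :: "'a::ordered_comm_monoid_add set"
  assumes "finite X" "T \<subseteq> X" "C \<subseteq> X" "card C = card T" "\<forall>t\<in>T. \<forall>x\<in>X - T. x < t"
  shows "\<Sum>C \<le> \<Sum>T"
proof -
  have "finite C" "finite T"
    using assms(1-3) finite_subset by blast+
  then have "card (C - T) = card (T - C)"
    using assms(4) card_Int_Diff[of C T] card_Int_Diff[of T C] by (simp add: Int_commute)
  then obtain h where h: "bij_betw h (C - T) (T - C)"
    using \<open>finite C\<close> \<open>finite T\<close> finite_same_card_bij by blast
  have "\<Sum>(C - T) \<le> (\<Sum>x\<in>C - T. h x)"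
    using assms(3,5) bij_betwE[OF h] by (intro sum_mono) (auto intro: less_imp_le)
  also have "\<dots> = \<Sum>(T - C)"
    using sum.reindex_bij_betw[OF h, of "\<lambda>x. x"] .
  finally have "\<Sum>(C \<inter> T) + \<Sum>(C - T) \<le> \<Sum>(T \<inter> C) + \<Sum>(T - C)"
    by (simp add: Int_commute add_left_mono)
  then show ?thesis
    using sum.Int_Diff[OF \<open>finite C\<close>, of "\<lambda>x. x" T]
      sum.Int_Diff[OF \<open>finite T\<close>, of "\<lambda>x. x" C]
    by simp
qed

lemma sum_le_sum_nonneg_part:
  fixes A :: "'a::linordered_ab_group_add set"
  assumes "finite A" "C \<subseteq> A"
  shows "\<Sum>C \<le> \<Sum>{a\<in>A. 0 \<le> a}"
proof -
  have "finite C"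
    using assms finite_subset by blast
  then have "\<Sum>C = \<Sum>(C \<inter> {a. 0 \<le> a}) + \<Sum>(C - {a. 0 \<le> a})"
    by (rule sum.Int_Diff)
  also have "\<dots> \<le> \<Sum>{a\<in>A. 0 \<le> a} + 0"
    using assms by (intro add_mono sum_mono2 sum_nonpos) auto
  finally show ?thesis
    by simp
qed

lemma card_nonneg_add_card_neg:
  fixes A :: "'a::{linorder, zero} set"
  assumes "finite A"
  shows "card {a\<in>A. 0 \<le> a} + card {a\<in>A. a < 0} = card A"
proof -
  have "A = {a\<in>A. 0 \<le> a} \<union> {a\<in>A. a < 0}"
    by auto
  then show ?thesis
    using assms card_Un_disjoint[of "{a\<in>A. 0 \<le> a}" "{a\<in>A. a < 0}"] by force
qed

lemma inj_on_power2_int_iff: "inj_on (\<lambda>x::int. x\<^sup>2) C \<longleftrightarrow> (\<forall>x\<in>C. x \<noteq> 0 \<longrightarrow> - x \<notin> C)"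
  by (auto simp: inj_on_def power2_eq_iff)

lemma restricted_sumset_iff:
  "s \<in> restricted_sumset n A \<longleftrightarrow>
     (\<exists>C. C \<subseteq> A \<and> finite C \<and> card C = n \<and> (\<forall>x\<in>C. x \<noteq> 0 \<longrightarrow> - x \<notin> C) \<and> s = \<Sum>C)"
  (is "_ \<longleftrightarrow> ?rhs")
proof -
  have distinct_squares_iff:
    "(\<forall>i<n. \<forall>j<n. i < j \<longrightarrow> (a i)\<^sup>2 \<noteq> (a j)\<^sup>2) \<longleftrightarrow> inj_on (\<lambda>i. (a i)\<^sup>2) {..<n}"
    for a :: "nat \<Rightarrow> int"
    by (auto simp: inj_on_def) (metis linorder_neq_iff)
  show ?thesis
  proof
    assume "s \<in> restricted_sumset n A"
    then obtain a where
      a: "s = (\<Sum>i<n. a i)" "\<forall>i<n. a i \<in> A" "inj_on ((\<lambda>x. x\<^sup>2) \<circ> a) {..<n}"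
      unfolding restricted_sumset_def distinct_squares_iff by (auto simp: comp_def)
    have "inj_on a {..<n}"
      using a(3) by (rule inj_on_imageI2)
    moreover have "inj_on (\<lambda>x. x\<^sup>2) (a ` {..<n})"
      using a(3) by (rule inj_on_imageI)
    ultimately show ?rhs
      using a by (intro exI[of _ "a ` {..<n}"])
        (auto simp: card_image sum.reindex inj_on_power2_int_iff)
  next
    assume ?rhs
    then obtain C where C: "C \<subseteq> A" "finite C" "card C = n" "inj_on (\<lambda>x. x\<^sup>2) C" "s = \<Sum>C"
      by (auto simp: inj_on_power2_int_iff)
    then obtain h where h: "bij_betw h {..<n} C"
      using ex_bij_betw_nat_finite by (metis atLeast0LessThan)
    then have "inj_on ((\<lambda>x. x\<^sup>2) \<circ> h) {..<n}"
      using C(4) by (metis bij_betw_def comp_inj_on)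
    moreover have "s = (\<Sum>i<n. h i)"
      using C(5) sum.reindex_bij_betw[OF h, of "\<lambda>x. x"] by simp
    ultimately show "s \<in> restricted_sumset n A"
      using h C(1) unfolding restricted_sumset_def distinct_squares_iff
      by (auto simp: comp_def bij_betw_def)
  qed
qed

lemma restricted_sumsetI_nonneg:
  assumes "C \<subseteq> A" "finite C" "\<forall>x\<in>C. 0 \<le> x"
  shows "\<Sum>C \<in> restricted_sumset (card C) A"
proof -
  have "\<forall>x\<in>C. x \<noteq> 0 \<longrightarrow> - x \<notin> C"
    using assms(3) by (metis neg_0_le_iff_le order_antisym)
  then show ?thesis
    using assms(1,2) unfolding restricted_sumset_iff by blast
qed

lemma restricted_sumset_mono: "A \<subseteq> B \<Longrightarrow> restricted_sumset n A \<subseteq> restricted_sumset n B"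
  unfolding restricted_sumset_def by blast

lemma finite_restricted_sumset: "finite A \<Longrightarrow> finite (restricted_sumset n A)"
proof -
  assume "finite A"
  have "restricted_sumset n A \<subseteq> Sum ` Pow A"
    by (auto simp: restricted_sumset_iff)
  then show ?thesis
    using \<open>finite A\<close> finite_subset by blast
qed

lemma restricted_sumset_uminus:
  "restricted_sumset n (uminus ` A) = uminus ` restricted_sumset n A"
proof -
  have neg: "uminus ` restricted_sumset n B \<subseteq> restricted_sumset n (uminus ` B)" for B :: "int set"
  proof
    fix s assume "s \<in> uminus ` restricted_sumset n B"
    then obtain t where "t \<in> restricted_sumset n B" "s = - t"
      by blast
    then obtain C where C: "C \<subseteq> B" "finite C" "card C = n" "\<forall>x\<in>C. x \<noteq> 0 \<longrightarrow> - x \<notin> C" "s = - \<Sum>C"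
      unfolding restricted_sumset_iff by blast
    have "uminus ` C \<subseteq> uminus ` B" "finite (uminus ` C)"
      using C(1,2) by auto
    moreover have "card (uminus ` C) = n" "\<Sum>(uminus ` C) = s"
      using C(3,5) by (simp_all add: card_image sum.reindex sum_negf)
    moreover have "\<forall>x\<in>uminus ` C. x \<noteq> 0 \<longrightarrow> - x \<notin> uminus ` C"
      using C(4) by force
    ultimately show "s \<in> restricted_sumset n (uminus ` B)"
      unfolding restricted_sumset_iff by blast
  qed
  have "restricted_sumset n (uminus ` A) = uminus ` uminus ` restricted_sumset n (uminus ` A)"
    by (simp add: image_image)
  also have "\<dots> \<subseteq> uminus ` restricted_sumset n A"
    using image_mono[OF neg[of "uminus ` A"], of uminus] by (simp add: image_image)
  finally show ?thesis
    using neg[of A] by blast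
qed

lemma restricted_sumset_insert:
  assumes "q \<notin> A" "- q \<notin> A"
  shows "(+) q ` restricted_sumset n A \<subseteq> restricted_sumset (Suc n) (insert q A)"
proof
  fix s assume "s \<in> (+) q ` restricted_sumset n A"
  then obtain t where "t \<in> restricted_sumset n A" "s = q + t"
    by blast
  then obtain C where C: "C \<subseteq> A" "finite C" "card C = n" "\<forall>x\<in>C. x \<noteq> 0 \<longrightarrow> - x \<notin> C" "s = q + \<Sum>C"
    unfolding restricted_sumset_iff by blast
  have "q \<notin> C" "- q \<notin> C"
    using C(1) assms by blast+
  then have "insert q C \<subseteq> insert q A" "finite (insert q C)" "card (insert q C) = Suc n"
    "s = \<Sum>(insert q C)" "\<forall>x\<in>insert q C. x \<noteq> 0 \<longrightarrow> - x \<notin> insert q C"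
    using C by auto
  then show "s \<in> restricted_sumset (Suc n) (insert q A)"
    unfolding restricted_sumset_iff by blast
qed

lemma restricted_sumset_exchange:
  assumes "C \<subseteq> A" "finite C" "\<forall>x\<in>C. 0 \<le> x"
    and "y \<in> C" "b \<in> A" "b \<notin> C" "- b \<notin> C - {y}"
  shows "\<Sum>C - y + b \<in> restricted_sumset (card C) A"
proof -
  let ?D = "insert b (C - {y})"
  have "0 < card C"
    using assms(2,4) card_gt_0_iff by blast
  then have "card ?D = card C" "\<Sum>C - y + b = \<Sum>?D"
    using assms(2,4,6) by (simp_all add: sum_diff1)
  moreover have "\<forall>x\<in>C. x \<noteq> 0 \<longrightarrow> - x \<notin> C"
    using assms(3) by (metis neg_0_le_iff_le order_antisym)
  then have "\<forall>x\<in>?D. x \<noteq> 0 \<longrightarrow> - x \<notin> ?D"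
    using assms(6,7) by auto
  moreover have "?D \<subseteq> A" "finite ?D"
    using assms(1,2,5) by auto
  ultimately show ?thesis
    unfolding restricted_sumset_iff by blast
qed

lemma card_restricted_sumset_insert_max:
  assumes "finite A" "\<forall>x\<in>A. x < b" "n \<le> card {a\<in>A. 0 \<le> a}"
  shows "card (restricted_sumset n A) + n \<le> card (restricted_sumset n (insert b A))"
proof -
  obtain T where T: "T \<subseteq> {a\<in>A. 0 \<le> a}" "card T = n" "\<forall>t\<in>T. \<forall>x\<in>{a\<in>A. 0 \<le> a} - T. x < t"
    using obtain_upper_subset[of "{a\<in>A. 0 \<le> a}" n] assms(1,3) by auto
  have "T \<subseteq> A"
    using T(1) by blast
  then have "finite T"
    using assms(1) finite_subset by blast
  have upper: "\<forall>t\<in>T. \<forall>x\<in>A - T. x < t"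
    using T(1,3) by force
  define New where "New = (\<lambda>y. \<Sum>T - y + b) ` T"
  have "card New = n"
    unfolding New_def using T(2) by (simp add: card_image inj_on_def)
  have "New \<subseteq> restricted_sumset n (insert b A)"
  proof
    fix s assume "s \<in> New"
    then obtain y where "y \<in> T" "s = \<Sum>T - y + b"
      unfolding New_def by blast
    moreover have "b \<notin> T" "- b \<notin> T"
      using T(1) assms(2) subsetD by fastforce+
    ultimately show "s \<in> restricted_sumset n (insert b A)"
      using T(1,2) \<open>finite T\<close> restricted_sumset_exchange[of T "insert b A" y b] by auto
  qed
  moreover have "restricted_sumset n A \<subseteq> restricted_sumset n (insert b A)"
    by (intro restricted_sumset_mono) auto
  ultimately have sub: "restricted_sumset n A \<union> New \<subseteq> restricted_sumset n (insert b A)"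
    by blast
  have below: "s \<le> \<Sum>T" if "s \<in> restricted_sumset n A" for s
    using that T(2) upper sum_le_sum_upper_subset[OF assms(1) \<open>T \<subseteq> A\<close>]
    unfolding restricted_sumset_iff by auto
  have above: "\<Sum>T < s" if "s \<in> New" for s
    using that T(1) assms(2) unfolding New_def by auto
  have "card (restricted_sumset n A) + n = card (restricted_sumset n A \<union> New)"
    using below above \<open>card New = n\<close> \<open>finite T\<close> finite_restricted_sumset[OF assms(1)]
    by (subst card_Un_disjoint) (auto simp: New_def dest: leD)
  also have "\<dots> \<le> card (restricted_sumset n (insert b A))"
    using sub assms(1) by (intro card_mono finite_restricted_sumset) auto
  finally show ?thesis .
qed

lemma card_restricted_sumset_insert_opposites:
  assumes "finite A" "0 < v" "v \<notin> A" "card {a\<in>A. 0 \<le> a} = m"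
    and "\<forall>q\<in>A. q < 0 \<longrightarrow> - q \<in> A \<and> - v < q"
  shows "card (restricted_sumset m A) + card {a\<in>A. a < 0} + 1
           \<le> card (restricted_sumset (Suc m) (insert v (insert (- v) A)))"
    (is "_ \<le> card (restricted_sumset _ ?B)")
proof -
  let ?U = "insert v {a\<in>A. 0 \<le> a}"
  define Low where "Low = (+) (- v) ` restricted_sumset m A"
  define High where "High = insert (\<Sum>?U) ((\<lambda>q. \<Sum>?U + 2 * q) ` {a\<in>A. a < 0})"
  have "- v \<notin> A"
    using assms(2,5) by force
  have U: "?U \<subseteq> ?B" "finite ?U" "\<forall>x\<in>?U. 0 \<le> x" "card ?U = Suc m"
    using assms(1-4) by auto
  have "Low \<subseteq> restricted_sumset (Suc m) (insert (- v) A)"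
    unfolding Low_def using \<open>- v \<notin> A\<close> assms(3) by (intro restricted_sumset_insert) auto
  also have "\<dots> \<subseteq> restricted_sumset (Suc m) ?B"
    by (intro restricted_sumset_mono) auto
  finally have "Low \<subseteq> restricted_sumset (Suc m) ?B" .
  moreover have "High \<subseteq> restricted_sumset (Suc m) ?B"
  proof -
    have "\<Sum>?U - (- q) + q \<in> restricted_sumset (Suc m) ?B" if "q \<in> A" "q < 0" for q
      using restricted_sumset_exchange[OF U(1-3), of "- q" q] U(4) that assms(2,5) by auto
    then show ?thesis
      using restricted_sumsetI_nonneg[OF U(1-3)] U(4) unfolding High_def by (auto simp: algebra_simps)
  qed
  ultimately have sub: "Low \<union> High \<subseteq> restricted_sumset (Suc m) ?B"
    by blast
  have below: "s \<le> \<Sum>?U - 2 * v" if "s \<in> Low" for s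
    using that sum_le_sum_nonneg_part[OF assms(1)] U(2) assms(3)
    unfolding Low_def by (auto simp: restricted_sumset_iff)
  have above: "\<Sum>?U - 2 * v < s" if "s \<in> High" for s
    using that assms(2,5) unfolding High_def by auto
  have "card Low = card (restricted_sumset m A)"
    unfolding Low_def by (simp add: card_image)
  moreover have "card High = card {a\<in>A. a < 0} + 1"
    unfolding High_def using assms(1) by (subst card_insert_disjoint) (auto simp: card_image inj_on_def)
  moreover have "card (Low \<union> High) = card Low + card High"
    using below above assms(1) finite_restricted_sumset[OF assms(1)]
    by (intro card_Un_disjoint) (auto simp: Low_def High_def dest: leD)
  moreover have "card (Low \<union> High) \<le> card (restricted_sumset (Suc m) ?B)"
    using sub assms(1) by (intro card_mono finite_restricted_sumset) auto
  ultimately show ?thesis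
    by linarith
qed

lemma lower_bound_insert_max:
  assumes "finite A" "\<forall>x\<in>A. x < b" "n \<le> card {a\<in>A. 0 \<le> a}"
    and "n * (card A - n) + 2 \<le> card (restricted_sumset n A) + (n choose 2)"
  shows "n * (card (insert b A) - n) + 2 \<le> card (restricted_sumset n (insert b A)) + (n choose 2)"
proof -
  have "b \<notin> A"
    using assms(2) by blast
  moreover have "n \<le> card A"
    using assms(3) card_mono[OF assms(1), of "{a\<in>A. 0 \<le> a}"] by auto
  ultimately show ?thesis
    using assms(1,4) card_restricted_sumset_insert_max[OF assms(1-3)] by (simp add: algebra_simps)
qed

lemma lower_bound_insert_unpaired:
  assumes "finite A" "q \<notin> A" "- q \<notin> A" "m \<le> card A" "card A \<le> 2 * m"
    and "m * (card A - m) + 2 \<le> card (restricted_sumset m A) + (m choose 2)"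
  shows "Suc m * (card (insert q A) - Suc m) + 2
           \<le> card (restricted_sumset (Suc m) (insert q A)) + (Suc m choose 2)"
proof -
  have "card (restricted_sumset m A) = card ((+) q ` restricted_sumset m A)"
    by (simp add: card_image)
  also have "\<dots> \<le> card (restricted_sumset (Suc m) (insert q A))"
    using restricted_sumset_insert[OF assms(2,3)] assms(1)
    by (intro card_mono finite_restricted_sumset) auto
  finally have "card (restricted_sumset m A) \<le> card (restricted_sumset (Suc m) (insert q A))" .
  moreover have "card (insert q A) - Suc m = card A - m" "Suc m choose 2 = (m choose 2) + m"
    using assms(1,2) by (simp_all add: numeral_2_eq_2)
  ultimately show ?thesis
    using assms(4-6) by (simp add: algebra_simps)
qed

lemma lower_bound_insert_opposites:
  assumes "finite A" "0 < v" "v \<notin> A" "card {a\<in>A. 0 \<le> a} = m"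
    and "\<forall>q\<in>A. q < 0 \<longrightarrow> - q \<in> A \<and> - v < q"
    and "m * (card A - m) + 2 \<le> card (restricted_sumset m A) + (m choose 2)"
  shows "Suc m * (card (insert v (insert (- v) A)) - Suc m) + 2
           \<le> card (restricted_sumset (Suc m) (insert v (insert (- v) A))) + (Suc m choose 2)"
proof -
  have "- v \<notin> A"
    using assms(2,5) by force
  then have "card (insert v (insert (- v) A)) - Suc m = Suc (card {a\<in>A. a < 0})"
    "card A - m = card {a\<in>A. a < 0}" "Suc m choose 2 = (m choose 2) + m"
    using card_nonneg_add_card_neg[OF assms(1)] assms(1-4) by (simp_all add: numeral_2_eq_2)
  then show ?thesis
    using card_restricted_sumset_insert_opposites[OF assms(1-5)] assms(6) by simp
qed

lemma lower_bound_nonneg: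
  assumes "finite A" "\<forall>x\<in>A. 0 \<le> x" "2 \<le> card A"
  shows "2 \<le> card (restricted_sumset (card A) A) + (card A choose 2)"
proof -
  have "restricted_sumset (card A) A \<noteq> {}"
    using restricted_sumsetI_nonneg[OF _ assms(1,2)] by blast
  then have "1 \<le> card (restricted_sumset (card A) A)"
    using finite_restricted_sumset[OF assms(1)] by (simp add: Suc_le_eq card_gt_0_iff)
  moreover have "1 \<le> card A choose 2"
    using zero_less_binomial[OF assms(3)] by linarith
  ultimately show ?thesis
    by linarith
qed

lemma card_restricted_sumset_lower_bound:
  assumes "finite A" "card {a\<in>A. a < 0} + 2 \<le> n" "n \<le> card {a\<in>A. 0 \<le> a}"
  shows "n * (card A - n) + 2 \<le> card (restricted_sumset n A) + (n choose 2)"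
  using assms
proof (induction "card A" arbitrary: A n rule: less_induct)
  case less
  let ?N = "{a\<in>A. a < 0}" and ?P = "{a\<in>A. 0 \<le> a}"
  have "finite ?N"
    using less.prems(1) by simp
  have card_A: "card A = card ?P + card ?N"
    using card_nonneg_add_card_neg[OF less.prems(1)] by simp
  have "2 \<le> n"
    using less.prems(2) by simp
  then obtain m where "n = Suc m"
    by (cases n) auto
  consider (large) "n < card ?P" | (no_negatives) "?N = {}" "card ?P = n"
    | (unpaired) q where "q \<in> ?N" "- q \<notin> A" "card ?P = n"
    | (paired) "?N \<noteq> {}" "\<forall>q\<in>?N. - q \<in> A" "card ?P = n"
    using less.prems(3) by force
  then show ?case
  proof cases
    case large
    define b where "b = Max A"
    define A' where "A' = A - {b}"
    have "?P \<noteq> {}"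
      using large by force
    then obtain x where "x \<in> A" "0 \<le> x"
      by blast
    then have b: "b \<in> A" "x \<le> b" "\<forall>x\<in>A'. x < b"
      using less.prems(1) unfolding b_def A'_def by (auto intro: Max_in le_neq_trans)
    then have "A = insert b A'" "{a\<in>A'. a < 0} = ?N" "{a\<in>A'. 0 \<le> a} = ?P - {b}"
      using \<open>0 \<le> x\<close> unfolding A'_def by auto
    moreover have "card A' < card A" "finite A'"
      using card_Diff1_less[OF less.prems(1) b(1)] less.prems(1) unfolding A'_def by simp_all
    moreover have "card (?P - {b}) = card ?P - 1"
      using b(1,2) \<open>0 \<le> x\<close> by simp
    ultimately show ?thesis
      using less.hyps[of A' n] less.prems(2) large lower_bound_insert_max[of A' b n] b(3) by simp
  next
    case no_negatives
    have "\<forall>x\<in>A. 0 \<le> x"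
      using no_negatives(1) by (metis (mono_tags, lifting) empty_iff mem_Collect_eq not_le)
    moreover have "card A = n"
      using card_A no_negatives(2) by (simp add: no_negatives(1))
    ultimately show ?thesis
      using lower_bound_nonneg[OF less.prems(1)] \<open>2 \<le> n\<close> by simp
  next
    case (unpaired q)
    define A' where "A' = A - {q}"
    have "q \<in> A" "q < 0"
      using unpaired(1) by simp_all
    then have "A = insert q A'" "q \<notin> A'" "- q \<notin> A'" "finite A'" "card A = Suc (card A')"
      using unpaired(2) less.prems(1) card_Suc_Diff1[OF less.prems(1)] unfolding A'_def by auto
    moreover have "{a\<in>A'. a < 0} = ?N - {q}" "{a\<in>A'. 0 \<le> a} = ?P"
      using \<open>q < 0\<close> unfolding A'_def by auto
    moreover have "card ?N = Suc (card (?N - {q}))"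
      using card_Suc_Diff1[OF \<open>finite ?N\<close> unpaired(1)] by simp
    ultimately show ?thesis
      using less.hyps[of A' m] lower_bound_insert_unpaired[of A' q m] less.prems(2) unpaired(3)
        card_A \<open>n = Suc m\<close>
      by simp
  next
    case paired
    have "Min ?N \<in> ?N" "\<forall>q\<in>?N. Min ?N \<le> q"
      using Min_in[OF \<open>finite ?N\<close> paired(1)] Min_le[OF \<open>finite ?N\<close>] by blast+
    then obtain v where v: "- v \<in> ?N" "\<forall>q\<in>?N. - v \<le> q"
      by (intro that[of "- Min ?N"]) (simp_all only: minus_minus)
    define A' where "A' = A - {v, - v}"
    have "v \<in> A" "- v \<in> A" "0 < v"
      using v(1) paired(2) by auto
    then have A_eq: "A = insert v (insert (- v) A')"
      unfolding A'_def by auto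
    have "v \<notin> A'" "finite A'" "A' \<subset> A"
      using \<open>v \<in> A\<close> less.prems(1) unfolding A'_def by auto
    then have "card A' < card A"
      using psubset_card_mono[OF less.prems(1)] by blast
    moreover have "{a\<in>A'. a < 0} = ?N - {- v}" "{a\<in>A'. 0 \<le> a} = ?P - {v}"
      using \<open>0 < v\<close> unfolding A'_def by auto
    moreover have "card ?N = Suc (card (?N - {- v}))" "card (?P - {v}) = m"
      using card_Suc_Diff1[OF \<open>finite ?N\<close> v(1)] \<open>v \<in> A\<close> \<open>0 < v\<close> paired(3) \<open>n = Suc m\<close>
      by simp_all
    ultimately have "m * (card A' - m) + 2 \<le> card (restricted_sumset m A') + (m choose 2)"
      "card {a\<in>A'. 0 \<le> a} = m"
      using less.hyps[of A' m] \<open>finite A'\<close> less.prems(2) \<open>n = Suc m\<close> by simp_all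
    moreover have "\<forall>q\<in>A'. q < 0 \<longrightarrow> - q \<in> A' \<and> - v < q"
      using paired(2) v(2) unfolding A'_def by force
    ultimately show ?thesis
      using lower_bound_insert_opposites[of A' v m] \<open>finite A'\<close> \<open>0 < v\<close> \<open>v \<notin> A'\<close> A_eq \<open>n = Suc m\<close>
      by simp
  qed
qed

lemma many_negatives_if_card_restricted_sumset_eq:
  assumes "finite A" "2 * n - 1 \<le> card A"
    and "card (restricted_sumset n A) + (n choose 2) = n * (card A - n) + 1"
  shows "n - 1 \<le> card {a\<in>A. a < 0}"
proof (rule ccontr)
  assume "\<not> n - 1 \<le> card {a\<in>A. a < 0}"
  then have "card {a\<in>A. a < 0} + 2 \<le> n" "n \<le> card {a\<in>A. 0 \<le> a}"
    using assms(2) card_nonneg_add_card_neg[OF assms(1)] by linarith+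
  then show False
    using card_restricted_sumset_lower_bound[OF assms(1)] assms(3) by fastforce
qed

lemma many_positives_if_card_restricted_sumset_eq:
  assumes "finite A" "2 * n - 1 \<le> card A"
    and "card (restricted_sumset n A) + (n choose 2) = n * (card A - n) + 1"
  shows "n - 1 \<le> card {a\<in>A. 0 < a}"
proof -
  have card_uminus: "card (uminus ` B) = card B" for B :: "int set"
    by (simp add: card_image)
  then have "n - 1 \<le> card {a\<in>uminus ` A. a < 0}"
    using many_negatives_if_card_restricted_sumset_eq[of "uminus ` A" n] assms
    by (simp add: restricted_sumset_uminus)
  also have "{a\<in>uminus ` A. a < 0} = uminus ` {a\<in>A. 0 < a}"
    by force
  finally show ?thesis
    using card_uminus by simp
qed

theorem lemma3p1:
  fixes n k :: nat and A :: "int set"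
  assumes "n > 2"
    and "k \<ge> 2 * n - 1"
    and "finite A" and "card A = k"
    and "int (card (restricted_sumset n A)) = (int k - 1) * int n - 3 * int (n choose 2) + 1"
  shows "card {a \<in> A. a < 0} \<ge> n - 1 \<and> card {a \<in> A. a > 0} \<ge> n - 1"
proof -
  have "n \<le> k"
    using assms(1,2) by linarith
  moreover have "2 * int (n choose 2) = int n * (int n - 1)"
    using arg_cong[OF times_binomial_minus1_eq[of 2 n], of int] assms(1) by (simp add: of_nat_diff)
  ultimately have "int (card (restricted_sumset n A) + (n choose 2)) = int (n * (card A - n) + 1)"
    using assms(4,5) by (simp add: of_nat_diff algebra_simps)
  then have "card (restricted_sumset n A) + (n choose 2) = n * (card A - n) + 1"
    by (rule of_nat_eq_iff[THEN iffD1])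
  then show ?thesis
    using many_negatives_if_card_restricted_sumset_eq many_positives_if_card_restricted_sumset_eq
      assms(2-4) by blast
qed

end
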